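(* Let $m\ge 2$ and let $q$ be an $m\times m$ matrix each of whose entries is either $0$ or an indeterminate, where the indeterminates occurring in $q$ are pairwise distinct and algebraically independent over $F$ ($F=\mathbb{R}$ or $\mathbb{C}$), and suppose $\det q$ is an irreducible polynomial. Then for almost all assignments of values to the indeterminates satisfying the constraint $\det q=0$ — precisely, for every assignment with $\det q=0$ at which a certain polynomial $P$ not divisible by $\det q$ does not vanish — every nonzero vector $\psi\in F^m$ with $q\psi=0$ has $\psi_j\neq 0$ for every index $j=1,\dots,m$.
   Context: The matrix $q$ is the off-diagonal block of a chiral tight-binding Hamiltonian on a bipartite graph (rows indexed by white sites, columns by black sites, entry an independent indeterminate "hopping term" if the sites are adjacent, $0$ otherwise). A vector $\psi$ with $q\psi=0$ is a zero energy (null) state supported on one sublattice; the claim is that it has nonzero amplitude on every site of that sublattice. *)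

theory Defs
  imports "Jordan_Normal_Form.Determinant" "HOL-Library.Poly_Mapping"
          "HOL-Computational_Algebra.Factorial_Ring"
begin

type_synonym ('v, 'a) mpoly = "('v \<Rightarrow>\<^sub>0 nat) \<Rightarrow>\<^sub>0 'a"

definition mvar :: "'v \<Rightarrow> ('v, 'a::{zero,one}) mpoly" where
  "mvar v = Poly_Mapping.single (Poly_Mapping.single v 1) 1"

definition mpoly_eval :: "('v \<Rightarrow> 'a) \<Rightarrow> ('v, 'a::comm_semiring_1) mpoly \<Rightarrow> 'a" where
  "mpoly_eval x p =
     (\<Sum>mn \<in> Poly_Mapping.keys p. Poly_Mapping.lookup p mn * (\<Prod>v \<in> Poly_Mapping.keys mn. x v ^ Poly_Mapping.lookup mn v))"

definition mpoly_vars :: "('v, 'a::zero) mpoly \<Rightarrow> 'v set" where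
  "mpoly_vars p = (\<Union>mn \<in> Poly_Mapping.keys p. Poly_Mapping.keys mn)"

text \<open>Distinct positions carry distinct
  indeterminates, so they are pairwise distinct and algebraically independent.\<close>
definition generic_matrix :: "nat \<Rightarrow> (nat \<times> nat) set \<Rightarrow> (nat \<times> nat, 'a::comm_ring_1) mpoly mat" where
  "generic_matrix m S = mat m m (\<lambda>(i, j). if (i, j) \<in> S then mvar (i, j) else 0)"

definition eval_matrix :: "(nat \<times> nat \<Rightarrow> 'a) \<Rightarrow> (nat \<times> nat, 'a::comm_ring_1) mpoly mat \<Rightarrow> 'a mat" where
  "eval_matrix x q = map_mat (mpoly_eval x) q"

end

theory Submission
  imports Defs "HOL-Library.Product_Lexorder" "Jordan_Normal_Form.DL_Submatrix"
begin

(* The determinant of the generic matrix q is affine in each indeterminate; expanding along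
   the first row, det q = sum_k q_0k C_k with cofactors C_k free of the first-row indeterminates.
   Irreducibility forces every C_k to be nonzero: by the Frobenius-Koenig theorem a vanishing
   minor of a generic matrix comes from a zero block, and a zero block splits det q into two
   nonconstant determinants. Take P = prod_k C_k. Some q_0j is an indeterminate occurring in
   det q with coefficient C_j <> 0 but not in P, so det q does not divide P. Where P does not
   vanish, every first-row cofactor of the numerical matrix is nonzero, and replacing its first
   row by the unit row e_j gives an invertible matrix that kills any null vector psi with
   psi_j = 0. *)

definition monom_eval :: "('v \<Rightarrow> 'b::comm_semiring_1) \<Rightarrow> ('v \<Rightarrow>\<^sub>0 nat) \<Rightarrow> 'b" where
  "monom_eval x mn = (\<Prod>v\<in>Poly_Mapping.keys mn. x v ^ Poly_Mapping.lookup mn v)"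

definition mpoly_map_eval ::
    "('a::comm_semiring_1 \<Rightarrow> 'b::comm_semiring_1) \<Rightarrow> ('v \<Rightarrow> 'b) \<Rightarrow> ('v, 'a) mpoly \<Rightarrow> 'b" where
  "mpoly_map_eval c x p = (\<Sum>mn\<in>Poly_Mapping.keys p. c (Poly_Mapping.lookup p mn) * monom_eval x mn)"

lemma monom_eval_superset:
  assumes "finite F" "Poly_Mapping.keys mn \<subseteq> F"
  shows "monom_eval x mn = (\<Prod>v\<in>F. x v ^ Poly_Mapping.lookup mn v)"
  unfolding monom_eval_def using assms
  by (intro prod.mono_neutral_left) (auto simp: in_keys_iff)

lemma monom_eval_0 [simp]: "monom_eval x 0 = 1"
  by (simp add: monom_eval_def)

lemma monom_eval_add: "monom_eval x (a + b) = monom_eval x a * monom_eval x b"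
proof -
  let ?F = "Poly_Mapping.keys a \<union> Poly_Mapping.keys b"
  have "monom_eval x (a + b) = (\<Prod>v\<in>?F. x v ^ Poly_Mapping.lookup (a + b) v)"
    by (rule monom_eval_superset) (simp_all add: keys_add)
  also have "\<dots> = (\<Prod>v\<in>?F. x v ^ Poly_Mapping.lookup a v) * (\<Prod>v\<in>?F. x v ^ Poly_Mapping.lookup b v)"
    by (simp add: lookup_add power_add prod.distrib)
  also have "\<dots> = monom_eval x a * monom_eval x b"
    by (subst (1 2) monom_eval_superset) auto
  finally show ?thesis .
qed

lemma poly_mapping_sum_single_lookup:
  "p = (\<Sum>a\<in>Poly_Mapping.keys p. Poly_Mapping.single a (Poly_Mapping.lookup p a))"
  by (rule poly_mapping_eqI)
    (auto simp: lookup_sum lookup_single when_def in_keys_iff sum.neutral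
      simp flip: sum.remove[of "Poly_Mapping.keys p", OF finite_keys])

context comm_ring_hom
begin

lemma mpoly_map_eval_superset:
  assumes "finite F" "Poly_Mapping.keys p \<subseteq> F"
  shows "mpoly_map_eval hom x p = (\<Sum>mn\<in>F. hom (Poly_Mapping.lookup p mn) * monom_eval x mn)"
  unfolding mpoly_map_eval_def using assms
  by (intro sum.mono_neutral_left) (auto simp: in_keys_iff)

lemma mpoly_map_eval_add: "mpoly_map_eval hom x (p + q) = mpoly_map_eval hom x p + mpoly_map_eval hom x q"
proof -
  let ?F = "Poly_Mapping.keys p \<union> Poly_Mapping.keys q"
  have "mpoly_map_eval hom x (p + q) = (\<Sum>mn\<in>?F. hom (Poly_Mapping.lookup (p + q) mn) * monom_eval x mn)"
    by (rule mpoly_map_eval_superset) (simp_all add: keys_add)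
  also have "\<dots> = (\<Sum>mn\<in>?F. hom (Poly_Mapping.lookup p mn) * monom_eval x mn)
      + (\<Sum>mn\<in>?F. hom (Poly_Mapping.lookup q mn) * monom_eval x mn)"
    by (simp add: lookup_add hom_add distrib_right sum.distrib)
  also have "\<dots> = mpoly_map_eval hom x p + mpoly_map_eval hom x q"
    by (subst (1 2) mpoly_map_eval_superset) auto
  finally show ?thesis .
qed

lemma mpoly_map_eval_0 [simp]: "mpoly_map_eval hom x 0 = 0"
  by (simp add: mpoly_map_eval_def)

lemma mpoly_map_eval_1 [simp]: "mpoly_map_eval hom x 1 = 1"
  by (simp add: mpoly_map_eval_def)

lemma mpoly_map_eval_sum: "mpoly_map_eval hom x (sum f A) = (\<Sum>a\<in>A. mpoly_map_eval hom x (f a))"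
  by (induct A rule: infinite_finite_induct) (auto simp: mpoly_map_eval_add)

lemma mpoly_map_eval_single [simp]:
  "mpoly_map_eval hom x (Poly_Mapping.single a r) = hom r * monom_eval x a"
  by (simp add: mpoly_map_eval_def)

lemma mpoly_map_eval_mult: "mpoly_map_eval hom x (p * q) = mpoly_map_eval hom x p * mpoly_map_eval hom x q"
proof -
  let ?s = "\<lambda>p a. Poly_Mapping.single a (Poly_Mapping.lookup p a)"
  have "mpoly_map_eval hom x (p * q)
      = mpoly_map_eval hom x ((\<Sum>a\<in>Poly_Mapping.keys p. ?s p a) * (\<Sum>b\<in>Poly_Mapping.keys q. ?s q b))"
    by (simp flip: poly_mapping_sum_single_lookup)
  also have "\<dots> = (\<Sum>a\<in>Poly_Mapping.keys p. \<Sum>b\<in>Poly_Mapping.keys q.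
      hom (Poly_Mapping.lookup p a) * monom_eval x a * (hom (Poly_Mapping.lookup q b) * monom_eval x b))"
    by (simp add: sum_distrib_left sum_distrib_right mpoly_map_eval_sum mult_single monom_eval_add
        hom_mult ac_simps) (subst sum.swap, simp add: ac_simps)
  also have "\<dots> = mpoly_map_eval hom x p * mpoly_map_eval hom x q"
      unfolding mpoly_map_eval_def sum_distrib_left sum_distrib_right by (rule sum.swap)
  finally show ?thesis .
qed

lemma mpoly_map_eval_hom: "comm_ring_hom (mpoly_map_eval hom x)"
  by unfold_locales (simp_all add: mpoly_map_eval_add mpoly_map_eval_mult)

lemma mpoly_map_eval_mvar [simp]: "mpoly_map_eval hom x (mvar v) = x v"
  by (simp add: mvar_def monom_eval_def)

lemma hom_cofactor: "hom (cofactor A i j) = cofactor (map_mat hom A) i j"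
proof -
  have "map_mat hom (mat_delete A i j) = mat_delete (map_mat hom A) i j"
    by (rule eq_matI) (auto simp: mat_delete_def)
  then show ?thesis
    by (simp add: cofactor_def hom_mult hom_power hom_uminus flip: hom_det)
qed

end

lemma comm_ring_hom_id: "comm_ring_hom (id :: 'a::comm_ring_1 \<Rightarrow> 'a)"
  by unfold_locales auto

lemma mpoly_eval_eq_map_eval: "mpoly_eval x = mpoly_map_eval id x"
  by (simp add: fun_eq_iff mpoly_eval_def mpoly_map_eval_def monom_eval_def)

lemma comm_ring_hom_mpoly_eval: "comm_ring_hom (mpoly_eval x)"
  unfolding mpoly_eval_eq_map_eval by (rule comm_ring_hom.mpoly_map_eval_hom[OF comm_ring_hom_id])

lemma mpoly_eval_0 [simp]: "mpoly_eval x 0 = 0"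
  by (simp add: mpoly_eval_def)

lemma mpoly_eval_mvar [simp]: "mpoly_eval (x :: 'v \<Rightarrow> 'a::comm_ring_1) (mvar v) = x v"
  unfolding mpoly_eval_eq_map_eval by (rule comm_ring_hom.mpoly_map_eval_mvar[OF comm_ring_hom_id])

lemma mvar_inj: "(mvar a :: ('v, 'a::zero_neq_one) mpoly) = mvar b \<longleftrightarrow> a = b"
proof
  assume "(mvar a :: ('v, 'a) mpoly) = mvar b"
  then have "Poly_Mapping.lookup (mvar b :: ('v, 'a) mpoly) (Poly_Mapping.single a 1) = 1"
    by (metis lookup_single_eq mvar_def)
  then have "Poly_Mapping.single b (1::nat) = Poly_Mapping.single a 1"
    by (simp add: mvar_def lookup_single when_def split: if_splits)
  then show "a = b"
    by (metis lookup_single_eq lookup_single_not_eq zero_neq_one)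
qed simp

lemma mpoly_vars_0 [simp]: "mpoly_vars 0 = {}"
  by (simp add: mpoly_vars_def)

lemma mpoly_vars_1 [simp]: "mpoly_vars (1 :: ('v, 'a::comm_semiring_1) mpoly) = {}"
  by (simp add: mpoly_vars_def)

lemma mpoly_vars_mvar [simp]: "mpoly_vars (mvar w :: ('v, 'a::comm_semiring_1) mpoly) = {w}"
  by (simp add: mpoly_vars_def mvar_def)

lemma mpoly_vars_uminus [simp]: "mpoly_vars (- p) = mpoly_vars (p :: ('v, 'a::ab_group_add) mpoly)"
  by (simp add: mpoly_vars_def)

lemma mpoly_vars_add: "mpoly_vars (p + q) \<subseteq> mpoly_vars p \<union> mpoly_vars q"
  unfolding mpoly_vars_def using keys_add[of p q] by auto

lemma mpoly_vars_mult: "mpoly_vars (p * q) \<subseteq> mpoly_vars p \<union> mpoly_vars (q :: ('v, 'a::comm_semiring_1) mpoly)"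
proof
  fix v assume "v \<in> mpoly_vars (p * q)"
  then obtain mn where "mn \<in> Poly_Mapping.keys (p * q)" and v: "v \<in> Poly_Mapping.keys mn"
    unfolding mpoly_vars_def by auto
  then obtain a b where "mn = a + b" "a \<in> Poly_Mapping.keys p" "b \<in> Poly_Mapping.keys q"
    using keys_mult by blast
  then show "v \<in> mpoly_vars p \<union> mpoly_vars q"
    using v keys_add[of a b] unfolding mpoly_vars_def by auto
qed

lemma mpoly_vars_sum: "(\<And>a. a \<in> A \<Longrightarrow> mpoly_vars (f a) \<subseteq> S) \<Longrightarrow> mpoly_vars (sum f A) \<subseteq> S"
  by (induct A rule: infinite_finite_induct) (auto dest: subsetD[OF mpoly_vars_add])

lemma mpoly_vars_prod:
  "(\<And>a. a \<in> A \<Longrightarrow> mpoly_vars (f a) \<subseteq> S) \<Longrightarrow> mpoly_vars (prod f A :: ('v, 'a::comm_semiring_1) mpoly) \<subseteq> S"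
  by (induct A rule: infinite_finite_induct) (auto dest: subsetD[OF mpoly_vars_mult])

lemma mpoly_vars_neg_one_power [simp]: "mpoly_vars ((-1) ^ k :: ('v, 'a::comm_ring_1) mpoly) = {}"
  by (cases "even k") auto

lemma mpoly_vars_det:
  assumes "\<And>i j. i < dim_row M \<Longrightarrow> j < dim_col M \<Longrightarrow> mpoly_vars (M $$ (i, j)) \<subseteq> S"
  shows "mpoly_vars (det M :: ('v, 'a::comm_ring_1) mpoly) \<subseteq> S"
proof (cases "dim_row M = dim_col M")
  case True
  have "mpoly_vars (\<Prod>i = 0..<dim_col M. M $$ (i, p i)) \<subseteq> S" if "p permutes {0..<dim_col M}" for p
    using that assms True by (intro mpoly_vars_prod) (auto dest: permutes_in_image)
  moreover have "mpoly_vars (of_int (sign p) :: ('v, 'a) mpoly) = {}" for p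
    by (simp add: sign_def)
  ultimately show ?thesis
    unfolding det_def using True
    by (auto intro!: mpoly_vars_sum dest!: subsetD[OF mpoly_vars_mult])
qed (simp add: det_def)

lemma mpoly_vars_cofactor:
  assumes "\<And>i j. i < dim_row M \<Longrightarrow> j < dim_col M \<Longrightarrow> mpoly_vars (M $$ (i, j)) \<subseteq> S"
  shows "mpoly_vars (cofactor M i j :: ('v, 'a::comm_ring_1) mpoly) \<subseteq> S"
proof -
  have "mpoly_vars (det (mat_delete M i j)) \<subseteq> S"
  proof (rule mpoly_vars_det)
    fix a b assume "a < dim_row (mat_delete M i j)" "b < dim_col (mat_delete M i j)"
    then show "mpoly_vars (mat_delete M i j $$ (a, b)) \<subseteq> S"
      using assms[of "if a < i then a else Suc a" "if b < j then b else Suc b"]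
      unfolding mat_delete_def by (auto simp: less_diff_conv)
  qed
  then show ?thesis
    unfolding cofactor_def using mpoly_vars_mult[of "(-1) ^ (i + j)" "det (mat_delete M i j)"] by auto
qed

section \<open>A polynomial as a univariate polynomial in one variable\<close>

lemma comm_ring_hom_const_poly: "comm_ring_hom (\<lambda>a::'a::comm_ring_1. [:a:])"
  by unfold_locales auto

lemma comm_ring_hom_const_mpoly_poly:
  "comm_ring_hom (\<lambda>a::'a::comm_ring_1. [:Poly_Mapping.single (0 :: 'v \<Rightarrow>\<^sub>0 nat) a:])"
  by unfold_locales (auto simp: mult_single single_add mult.commute)

text \<open>Coefficients of poly_in_var v p are polynomials not involving v.\<close>
definition poly_in_var :: "'v \<Rightarrow> ('v, 'a::comm_ring_1) mpoly \<Rightarrow> ('v, 'a) mpoly poly" where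
  "poly_in_var v = mpoly_map_eval (\<lambda>a. [:Poly_Mapping.single 0 a:])
     (\<lambda>w. if w = v then [:0, 1:] else [:mvar w:])"

interpretation poly_in_var: comm_ring_hom "poly_in_var v"
  unfolding poly_in_var_def by (rule comm_ring_hom.mpoly_map_eval_hom[OF comm_ring_hom_const_mpoly_poly])

lemma poly_in_var_mvar: "poly_in_var v (mvar w) = (if w = v then [:0, 1:] else [:mvar w:])"
  unfolding poly_in_var_def by (rule comm_ring_hom.mpoly_map_eval_mvar[OF comm_ring_hom_const_mpoly_poly])

definition zero_or_other_var :: "'v \<Rightarrow> ('v, 'a::comm_ring_1) mpoly \<Rightarrow> bool" where
  "zero_or_other_var v p \<longleftrightarrow> p = 0 \<or> (\<exists>w. w \<noteq> v \<and> p = mvar w)"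

lemma poly_in_var_zero_or_other_var: "zero_or_other_var v p \<Longrightarrow> poly_in_var v p = [:p:]"
  unfolding zero_or_other_var_def by (auto simp: poly_in_var_mvar)

lemma poly_in_var_det_const:
  fixes M :: "('v, 'a::comm_ring_1) mpoly mat"
  assumes "\<And>i j. i < dim_row M \<Longrightarrow> j < dim_col M \<Longrightarrow> zero_or_other_var v (M $$ (i, j))"
  shows "poly_in_var v (det M) = [:det M:]"
proof -
  interpret const: comm_ring_hom "\<lambda>a::('v, 'a) mpoly. [:a:]"
    by (rule comm_ring_hom_const_poly)
  have "map_mat (poly_in_var v) M = map_mat (\<lambda>a. [:a:]) M"
    by (rule eq_matI) (auto simp: poly_in_var_zero_or_other_var assms)
  then show ?thesis
    by (metis poly_in_var.hom_det const.hom_det)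
qed

lemma poly_in_var_cofactor_const:
  fixes M :: "('v, 'a::comm_ring_1) mpoly mat"
  assumes "\<And>i' j. i' < dim_row M \<Longrightarrow> j < dim_col M \<Longrightarrow> i' \<noteq> i \<Longrightarrow> zero_or_other_var v (M $$ (i', j))"
  shows "poly_in_var v (cofactor M i j) = [:cofactor M i j:]"
proof -
  interpret const: comm_ring_hom "\<lambda>a::('v, 'a) mpoly. [:a:]"
    by (rule comm_ring_hom_const_poly)
  have minor: "poly_in_var v (det (mat_delete M i j)) = [:det (mat_delete M i j):]"
  proof (rule poly_in_var_det_const)
    fix a b assume "a < dim_row (mat_delete M i j)" "b < dim_col (mat_delete M i j)"
    then show "zero_or_other_var v (mat_delete M i j $$ (a, b))"
      using assms[of "if a < i then a else Suc a" "if b < j then b else Suc b"]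
      unfolding mat_delete_def by (auto simp: less_diff_conv)
  qed
  have sign: "poly_in_var v ((-1) ^ k) = [:(-1) ^ k:]" for k
    by (induct k) (auto simp: poly_in_var.hom_mult poly_in_var.hom_uminus)
  show ?thesis
    unfolding cofactor_def poly_in_var.hom_mult const.hom_mult minor sign ..
qed

lemma poly_in_var_det_linear:
  assumes B: "B \<in> carrier_mat n n" and i: "i < n" and j: "j < n"
    and v: "B $$ (i, j) = mvar v"
    and others: "\<And>i' j'. i' < n \<Longrightarrow> j' < n \<Longrightarrow> (i', j') \<noteq> (i, j) \<Longrightarrow> zero_or_other_var v (B $$ (i', j'))"
  shows "\<exists>b. poly_in_var v (det B) = [:b, cofactor B i j:]"
proof -
  interpret const: comm_ring_hom "\<lambda>a::('a, 'b) mpoly. [:a:]"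
    by (rule comm_ring_hom_const_poly)
  have cof: "poly_in_var v (cofactor B i k) = [:cofactor B i k:]" for k
    using B by (intro poly_in_var_cofactor_const) (auto intro!: others)
  have entry: "poly_in_var v (B $$ (i, k)) = [:B $$ (i, k):]" if "k \<in> {..<n} - {j}" for k
    using that i by (intro poly_in_var_zero_or_other_var others) auto
  have "poly_in_var v (det B) = (\<Sum>k<n. poly_in_var v (B $$ (i, k)) * [:cofactor B i k:])"
    by (simp add: laplace_expansion_row[OF B i] poly_in_var.hom_sum poly_in_var.hom_mult cof)
  also have "\<dots> = [:0, 1:] * [:cofactor B i j:] + (\<Sum>k\<in>{..<n} - {j}. [:B $$ (i, k) * cofactor B i k:])"
    using j by (simp add: sum.remove[of _ j] v poly_in_var_mvar entry mult.commute)
  also have "\<dots> = [:\<Sum>k\<in>{..<n} - {j}. B $$ (i, k) * cofactor B i k, cofactor B i j:]"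
    by (simp add: const.hom_sum[symmetric] mult.commute)
  finally show ?thesis ..
qed

lemma not_dvd_if_poly_in_var_linear:
  fixes p q :: "('v::linorder, 'a::idom) mpoly"
  assumes "poly_in_var v p = [:b, c:]" "c \<noteq> 0" "q \<noteq> 0" "poly_in_var v q = [:q:]"
  shows "\<not> p dvd q"
proof
  assume "p dvd q"
  then obtain r where "q = p * r" ..
  then have qr: "[:q:] = [:b, c:] * poly_in_var v r"
    using assms by (simp add: poly_in_var.hom_mult)
  then have "poly_in_var v r \<noteq> 0"
    using assms(3) by auto
  then have "degree ([:b, c:] * poly_in_var v r) = 1 + degree (poly_in_var v r)"
    using assms(2) by (subst degree_mult_eq) auto
  then show False
    using arg_cong[OF qr, of degree] by simp
qed
lemma pick_inj: "i < card S \<Longrightarrow> j < card S \<Longrightarrow> pick S i = pick S j \<Longrightarrow> i = j"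
  by (metis card_pick_le)

lemma pick_lessThan:
  assumes "i < n"
  shows "pick {..<n} i = i"
proof -
  have "{a\<in>{..<n}. a < i} = {..<i}"
    using assms by auto
  then show ?thesis
    using pick_card_in_set[of i "{..<n}"] assms by simp
qed

lemma card_bounded_subset: "R \<subseteq> {..<n} \<Longrightarrow> card {i. i < n \<and> i \<in> R} = card R"
  by (rule arg_cong[where f = card]) auto

context
  fixes A :: "'a mat" and n :: nat
  assumes A: "A \<in> carrier_mat n n"
begin

lemma submatrix_carrier_mat:
  "R \<subseteq> {..<n} \<Longrightarrow> C \<subseteq> {..<n} \<Longrightarrow> submatrix A R C \<in> carrier_mat (card R) (card C)"
  using A unfolding carrier_mat_def by (auto simp: dim_submatrix card_bounded_subset)

lemma submatrix_index_subset:
  "R \<subseteq> {..<n} \<Longrightarrow> C \<subseteq> {..<n} \<Longrightarrow> i < card R \<Longrightarrow> j < card C \<Longrightarrow>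
    submatrix A R C $$ (i, j) = A $$ (pick R i, pick C j)"
  using A by (intro submatrix_index) (auto simp: card_bounded_subset)

lemma submatrix_lessThan: "submatrix A {..<n} {..<n} = A"
  using A by (intro eq_matI) (auto simp: submatrix_index_subset pick_lessThan dim_submatrix card_bounded_subset)

end

lemma pick_Diff_pick:
  assumes R: "finite R" and i: "i < card R" and l: "l < card R - 1"
  shows "pick (R - {pick R i}) l = pick R (if l < i then l else Suc l)"
proof -
  let ?l = "if l < i then l else Suc l"
  let ?y = "pick R ?l"
  have l': "?l < card R"
    using l i by auto
  have "card {a \<in> R - {pick R i}. a < ?y} = l"
  proof (cases "l < i")
    case True
    then have "{a \<in> R - {pick R i}. a < ?y} = {a \<in> R. a < ?y}"
      using pick_mono[of i R ?l] i by auto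
    then show ?thesis
      using card_pick[of ?l R] l' True by simp
  next
    case False
    then have "pick R i \<in> {a \<in> R. a < ?y}"
      using pick_mono[of ?l R i] l' pick_in_set_le[OF i] by auto
    moreover have "{a \<in> R - {pick R i}. a < ?y} = {a \<in> R. a < ?y} - {pick R i}"
      by auto
    ultimately show ?thesis
      using card_pick[of ?l R] l' False R by simp
  qed
  moreover have "?y \<in> R - {pick R i}"
    using pick_in_set_le[OF l'] pick_inj[OF l' i] by auto
  ultimately show ?thesis
    using pick_card_in_set[of ?y "R - {pick R i}"] by simp
qed

lemma mat_delete_submatrix:
  assumes A: "A \<in> carrier_mat n n" and R: "R \<subseteq> {..<n}" and C: "C \<subseteq> {..<n}"
    and i: "i < card R" and j: "j < card C"
  shows "mat_delete (submatrix A R C) i j = submatrix A (R - {pick R i}) (C - {pick C j})"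
proof -
  have fin: "finite R" "finite C"
    using R C finite_subset by auto
  have card: "card (R - {pick R i}) = card R - 1" "card (C - {pick C j}) = card C - 1"
    using pick_in_set_le[OF i] pick_in_set_le[OF j] fin by simp_all
  have R': "R - {pick R i} \<subseteq> {..<n}" "C - {pick C j} \<subseteq> {..<n}"
    using R C by auto
  show ?thesis
  proof (rule eq_matI)
    fix a b assume "a < dim_row (submatrix A (R - {pick R i}) (C - {pick C j}))"
      "b < dim_col (submatrix A (R - {pick R i}) (C - {pick C j}))"
    then have a: "a < card R - 1" and b: "b < card C - 1"
      using submatrix_carrier_mat[OF A R'] card by auto
    then have "mat_delete (submatrix A R C) i j $$ (a, b)
        = A $$ (pick R (if a < i then a else Suc a), pick C (if b < j then b else Suc b))"
      using submatrix_carrier_mat[OF A R C]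
      by (auto simp: mat_delete_def submatrix_index_subset[OF A R C])
    also have "\<dots> = submatrix A (R - {pick R i}) (C - {pick C j}) $$ (a, b)"
      using a b card
      by (simp add: submatrix_index_subset[OF A R'] pick_Diff_pick[OF fin(1) i] pick_Diff_pick[OF fin(2) j])
    finally show "mat_delete (submatrix A R C) i j $$ (a, b) = submatrix A (R - {pick R i}) (C - {pick C j}) $$ (a, b)" .
  qed (use submatrix_carrier_mat[OF A R C] submatrix_carrier_mat[OF A R'] card in simp_all)
qed

lemma rank_of_enumeration_permutes:
  assumes R: "finite R" "card R = N" and e: "inj_on e {..<N}" "e ` {..<N} \<subseteq> R"
  obtains p where "p permutes {0..<N}" and "\<And>i. i < N \<Longrightarrow> pick R (p i) = e i"
proof
  define p where "p = (\<lambda>i. if i < N then card {a\<in>R. a < e i} else i)"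
  show pick: "pick R (p i) = e i" if "i < N" for i
    unfolding p_def using that e(2) by (auto intro!: pick_card_in_set)
  have "p i < N" if "i < N" for i
  proof -
    have "{a\<in>R. a < e i} \<subset> R" using e(2) that by auto
    then show ?thesis unfolding p_def using that R psubset_card_mono by auto
  qed
  moreover have "inj_on p {0..<N}"
  proof (rule inj_onI)
    fix i j assume "i \<in> {0..<N}" "j \<in> {0..<N}" "p i = p j"
    then show "i = j"
      using pick[of i] pick[of j] e(1) by (auto dest: inj_onD)
  qed
  moreover from calculation have "p ` {0..<N} = {0..<N}"
    by (intro endo_inj_surj) auto
  ultimately have "bij_betw p {0..<N} {0..<N}"
    by (simp add: bij_betw_def)
  then show "p permutes {0..<N}"
    by (rule bij_imp_permutes) (simp add: p_def)
qed

lemma det_permute_rows_cols: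
  assumes B: "B \<in> carrier_mat N N" and p: "p permutes {0..<N}" and q: "q permutes {0..<N}"
  shows "det (mat N N (\<lambda>(i,j). B $$ (p i, q j))) = of_int (sign p) * of_int (sign q) * det B"
proof -
  define Bc where "Bc = mat N N (\<lambda>(i,j). B $$ (i, q j))"
  have Bc: "Bc \<in> carrier_mat N N" unfolding Bc_def by simp
  have "mat N N (\<lambda>(i,j). B $$ (p i, q j)) = mat N N (\<lambda>(i,j). Bc $$ (p i, j))"
    using permutes_in_image[OF p] by (intro eq_matI) (auto simp: Bc_def)
  then have "det (mat N N (\<lambda>(i,j). B $$ (p i, q j))) = of_int (sign p) * det Bc"
    using det_permute_rows[OF Bc p] by simp
  moreover have "transpose_mat Bc = mat N N (\<lambda>(i,j). transpose_mat B $$ (q i, j))"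
    using B permutes_in_image[OF q] by (intro eq_matI) (auto simp: Bc_def)
  then have "det (transpose_mat Bc) = of_int (sign q) * det (transpose_mat B)"
    using det_permute_rows[OF iffD2[OF transpose_carrier_mat B] q] by simp
  then have "det Bc = of_int (sign q) * det B"
    using det_transpose[OF Bc] det_transpose[OF B] by simp
  ultimately show ?thesis by simp
qed

lemma det_submatrix_reindex:
  fixes A :: "'a::comm_ring_1 mat"
  assumes A: "A \<in> carrier_mat n n" and R: "R \<subseteq> {..<n}" "card R = N" and C: "C \<subseteq> {..<n}" "card C = N"
    and eR: "inj_on eR {..<N}" "eR ` {..<N} \<subseteq> R" and eC: "inj_on eC {..<N}" "eC ` {..<N} \<subseteq> C"
  obtains s where "s * s = 1" and "det (mat N N (\<lambda>(i,j). A $$ (eR i, eC j))) = s * det (submatrix A R C)"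
proof -
  have fin: "finite R" "finite C"
    using R C finite_subset by auto
  obtain p where p: "p permutes {0..<N}" "\<And>i. i < N \<Longrightarrow> pick R (p i) = eR i"
    using rank_of_enumeration_permutes[OF fin(1) R(2) eR] by blast
  obtain q where q: "q permutes {0..<N}" "\<And>i. i < N \<Longrightarrow> pick C (q i) = eC i"
    using rank_of_enumeration_permutes[OF fin(2) C(2) eC] by blast
  have B: "submatrix A R C \<in> carrier_mat N N"
    using submatrix_carrier_mat[OF A R(1) C(1)] R C by simp
  have "mat N N (\<lambda>(i,j). A $$ (eR i, eC j)) = mat N N (\<lambda>(i,j). submatrix A R C $$ (p i, q j))"
    using permutes_in_image[OF p(1)] permutes_in_image[OF q(1)] R C
    by (intro eq_matI) (auto simp: submatrix_index_subset[OF A R(1) C(1)] p(2) q(2))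
  then have "det (mat N N (\<lambda>(i,j). A $$ (eR i, eC j)))
      = (of_int (sign p) * of_int (sign q)) * det (submatrix A R C)"
    using det_permute_rows_cols[OF B p(1) q(1)] by simp
  moreover have "(of_int (sign p) :: 'a) \<in> {1, -1}" "(of_int (sign q) :: 'a) \<in> {1, -1}"
    by (rule signof_pm_one)+
  then have "(of_int (sign p) * of_int (sign q) :: 'a) * (of_int (sign p) * of_int (sign q)) = 1"
    by auto
  ultimately show ?thesis
    using that by blast
qed

definition pick_append :: "nat set \<Rightarrow> nat set \<Rightarrow> nat \<Rightarrow> nat" where
  "pick_append I J i = (if i < card I then pick I i else pick J (i - card I))"

lemma pick_append_in:
  "i < card I + card J \<Longrightarrow> pick_append I J i \<in> I \<union> J"
  unfolding pick_append_def using pick_in_set_le[of i I] pick_in_set_le[of "i - card I" J] by auto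

lemma inj_on_pick_append:
  assumes "I \<inter> J = {}"
  shows "inj_on (pick_append I J) {..<card I + card J}"
proof (rule inj_onI)
  fix i j assume i: "i \<in> {..<card I + card J}" and j: "j \<in> {..<card I + card J}"
    and eq: "pick_append I J i = pick_append I J j"
  have inI: "pick_append I J k \<in> I" if "k < card I" for k
    using that pick_in_set_le[of k I] by (simp add: pick_append_def)
  have inJ: "pick_append I J k \<in> J" if "\<not> k < card I" "k \<in> {..<card I + card J}" for k
    using that pick_in_set_le[of "k - card I" J] by (auto simp: pick_append_def)
  show "i = j"
  proof (cases "i < card I"; cases "j < card I")
    assume "i < card I" "j < card I"
    then show ?thesis
      using eq pick_inj[of i I j] by (simp add: pick_append_def)
  next
    assume "\<not> i < card I" "\<not> j < card I"
    then show ?thesis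
      using eq i j pick_inj[of "i - card I" J "j - card I"] by (simp add: pick_append_def less_diff_conv2)
  qed (use eq i j inI inJ assms in \<open>metis disjoint_iff lessThan_iff\<close>)+
qed

lemma det_submatrix_block_triangular:
  fixes A :: "'a::idom mat"
  assumes A: "A \<in> carrier_mat n n" and R: "R \<subseteq> {..<n}" and C: "C \<subseteq> {..<n}" and RC: "card R = card C"
    and I: "I \<subseteq> R" and K: "K \<subseteq> C" and IK: "card I = card K"
    and zero: "\<And>i j. i \<in> I \<Longrightarrow> j \<in> C - K \<Longrightarrow> A $$ (i, j) = 0"
  obtains s where "s * s = 1"
    and "det (submatrix A R C) = s * (det (submatrix A I K) * det (submatrix A (R - I) (C - K)))"
proof -
  define N where "N = card R"
  define r where "r = card I"
  have fin: "finite I" "finite K"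
    using R C I K by (meson finite_lessThan finite_subset subset_trans)+
  have cRI: "card (R - I) = N - r" and cCK: "card (C - K) = N - r" and rN: "r \<le> N"
    using card_Diff_subset[OF fin(1) I] card_Diff_subset[OF fin(2) K] card_mono[OF _ I] R
    by (auto simp: N_def r_def RC IK finite_subset)
  have sub: "I \<subseteq> {..<n}" "K \<subseteq> {..<n}" "R - I \<subseteq> {..<n}" "C - K \<subseteq> {..<n}"
    using I K R C by auto
  define eR where "eR = pick_append I (R - I)"
  define eC where "eC = pick_append K (C - K)"
  have eR: "inj_on eR {..<N}" "eR ` {..<N} \<subseteq> R"
    using inj_on_pick_append[of I "R - I"] pick_append_in[of _ I "R - I"] cRI rN I
    unfolding eR_def r_def by auto
  have eC: "inj_on eC {..<N}" "eC ` {..<N} \<subseteq> C"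
    using inj_on_pick_append[of K "C - K"] pick_append_in[of _ K "C - K"] cCK rN K IK
    unfolding eC_def r_def by auto
  define A11 where "A11 = submatrix A I K"
  define A21 where "A21 = mat (N - r) r (\<lambda>(i,j). A $$ (eR (i + r), eC j))"
  define A22 where "A22 = submatrix A (R - I) (C - K)"
  have A11: "A11 \<in> carrier_mat r r" and A22: "A22 \<in> carrier_mat (N - r) (N - r)"
    using submatrix_carrier_mat[OF A sub(1,2)] submatrix_carrier_mat[OF A sub(3,4)] cRI cCK IK
    unfolding A11_def A22_def r_def by auto
  have entry: "A $$ (eR i, eC j) = four_block_mat A11 (0\<^sub>m r (N - r)) A21 A22 $$ (i, j)"
    if i: "i < N" and j: "j < N" for i j
  proof (cases "i < r"; cases "j < r")
    assume "i < r" "\<not> j < r"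
    moreover have "pick (C - K) (j - r) \<in> C - K"
      using calculation cCK j by (intro pick_in_set_le) simp
    ultimately show ?thesis
      using A11 A22 pick_in_set_le[of i I] zero i j unfolding eR_def eC_def pick_append_def r_def
      by (simp add: IK)
  qed (use A11 A22 i j cRI cCK IK in \<open>simp_all add: A11_def A21_def A22_def eR_def eC_def
      pick_append_def r_def submatrix_index_subset[OF A sub(1,2)] submatrix_index_subset[OF A sub(3,4)]\<close>)
  have "mat N N (\<lambda>(i,j). A $$ (eR i, eC j)) = four_block_mat A11 (0\<^sub>m r (N - r)) A21 A22"
    using A11 A22 rN by (intro eq_matI) (simp_all add: entry)
  then have "det (mat N N (\<lambda>(i,j). A $$ (eR i, eC j))) = det A11 * det A22"
    using det_four_block_mat_upper_right_zero[OF A11 refl _ A22] by (simp add: A21_def)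
  moreover obtain s where "s * s = 1" "det (mat N N (\<lambda>(i,j). A $$ (eR i, eC j))) = s * det (submatrix A R C)"
    using det_submatrix_reindex[OF A R N_def[symmetric] C RC[folded N_def, symmetric] eR eC] .
  ultimately show ?thesis
    using that[of s] unfolding A11_def A22_def by (metis mult.assoc mult.left_neutral)
qed

section \<open>The Frobenius-Koenig theorem for generic matrices\<close>

definition sparse_generic_mat :: "nat \<Rightarrow> ('v, 'a::comm_ring_1) mpoly mat \<Rightarrow> bool" where
  "sparse_generic_mat n A \<longleftrightarrow> A \<in> carrier_mat n n \<and>
     (\<forall>i<n. \<forall>j<n. A $$ (i, j) = 0 \<or>
        (\<exists>w. A $$ (i, j) = mvar w \<and> (\<forall>i'<n. \<forall>j'<n. A $$ (i', j') = mvar w \<longrightarrow> (i', j') = (i, j))))"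

lemma sparse_generic_mat_zero_or_other_var:
  assumes A: "sparse_generic_mat n A" and ij: "i < n" "j < n" and kl: "k < n" "l < n"
    and ne: "(i, j) \<noteq> (k, l)" and v: "A $$ (k, l) = mvar v"
  shows "zero_or_other_var v (A $$ (i, j))"
  using A ij kl ne v unfolding sparse_generic_mat_def zero_or_other_var_def by metis

text \<open>A variable entry at (r, c) enters the determinant linearly, with the complementary
  minor as coefficient, so a vanishing determinant forces that minor to vanish.\<close>
lemma sparse_generic_det_submatrix_zero_minor:
  fixes A :: "('v::linorder, 'a::idom) mpoly mat"
  assumes A: "sparse_generic_mat n A" and R: "R \<subseteq> {..<n}" and C: "C \<subseteq> {..<n}" and RC: "card R = card C"
    and rc: "r \<in> R" "c \<in> C" "A $$ (r, c) \<noteq> 0" and det0: "det (submatrix A R C) = 0"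
  shows "det (submatrix A (R - {r}) (C - {c})) = 0"
proof -
  have carrier: "A \<in> carrier_mat n n"
    using A by (simp add: sparse_generic_mat_def)
  from A rc R C obtain v where v: "A $$ (r, c) = mvar v"
    unfolding sparse_generic_mat_def by blast
  define i where "i = card {a\<in>R. a < r}"
  define j where "j = card {a\<in>C. a < c}"
  have fin: "finite R" "finite C"
    using R C finite_subset by auto
  have i: "i < card R" and pick_i: "pick R i = r"
    using rc fin psubset_card_mono[of R "{a\<in>R. a < r}"] pick_card_in_set[of r R]
    unfolding i_def by auto
  have j: "j < card R" and pick_j: "pick C j = c"
    using rc fin psubset_card_mono[of C "{a\<in>C. a < c}"] pick_card_in_set[of c C] RC
    unfolding j_def by auto
  have B: "submatrix A R C \<in> carrier_mat (card R) (card R)"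
    using submatrix_carrier_mat[OF carrier R C] RC by simp
  have entry: "submatrix A R C $$ (i', j') = A $$ (pick R i', pick C j')"
    if "i' < card R" "j' < card R" for i' j'
    using that RC by (simp add: submatrix_index_subset[OF carrier R C])
  have "\<exists>b. poly_in_var v (det (submatrix A R C)) = [:b, cofactor (submatrix A R C) i j:]"
  proof (rule poly_in_var_det_linear[OF B i j])
    show "submatrix A R C $$ (i, j) = mvar v"
      using i j by (simp add: entry pick_i pick_j v)
    fix i' j' assume ij': "i' < card R" "j' < card R" "(i', j') \<noteq> (i, j)"
    then have "(pick R i', pick C j') \<noteq> (r, c)"
      using pick_inj[of i' R i] pick_inj[of j' C j] i j RC pick_i pick_j by auto
    moreover have "pick R i' < n" "pick C j' < n"
      using pick_in_set_le[of i' R] pick_in_set_le[of j' C] ij' RC R C by auto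
    ultimately show "zero_or_other_var v (submatrix A R C $$ (i', j'))"
      using sparse_generic_mat_zero_or_other_var[OF A _ _ _ _ _ v] rc R C ij' by (auto simp: entry)
  qed
  then have "cofactor (submatrix A R C) i j = 0"
    using det0 by auto
  then have "det (mat_delete (submatrix A R C) i j) = 0"
    by (simp add: cofactor_def)
  then show ?thesis
    using mat_delete_submatrix[OF carrier R C i] j RC pick_i pick_j by simp
qed

lemma det_submatrix_zero_block_split:
  fixes A :: "'a::idom mat"
  assumes A: "A \<in> carrier_mat n n" and R: "R \<subseteq> {..<n}" and C: "C \<subseteq> {..<n}" and RC: "card R = card C"
    and I: "I \<subseteq> R" and J: "J \<subseteq> C" and IJ: "card I + card J = card R"
    and zero: "\<forall>i\<in>I. \<forall>j\<in>J. A $$ (i, j) = 0" and det0: "det (submatrix A R C) = 0"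
  shows "det (submatrix A I (C - J)) = 0 \<or> det (submatrix A (R - I) J) = 0"
proof -
  have "finite J"
    using finite_subset[OF subset_trans[OF J C]] by simp
  then have "card I = card (C - J)"
    using card_Diff_subset[OF _ J] IJ RC by simp
  moreover have "C - (C - J) = J"
    using J by auto
  ultimately obtain s where "s * s = 1"
    and "det (submatrix A R C) = s * (det (submatrix A I (C - J)) * det (submatrix A (R - I) J))"
    using det_submatrix_block_triangular[OF A R C RC I Diff_subset[of C J]] zero by metis
  then show ?thesis
    using det0 by (metis mult_eq_0_iff one_neq_zero)
qed

theorem frobenius_koenig:
  fixes A :: "('v::linorder, 'a::idom) mpoly mat"
  assumes A: "sparse_generic_mat n A"
    and "R \<subseteq> {..<n}" "C \<subseteq> {..<n}" "card R = card C" "det (submatrix A R C) = 0"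
  shows "\<exists>I J. I \<subseteq> R \<and> J \<subseteq> C \<and> card I + card J = card R + 1 \<and> (\<forall>i\<in>I. \<forall>j\<in>J. A $$ (i, j) = 0)"
  using assms(2-)
proof (induction "card R" arbitrary: R C rule: less_induct)
  case less
  note R = less.prems(1) and C = less.prems(2) and RC = less.prems(3) and det0 = less.prems(4)
  have carrier: "A \<in> carrier_mat n n"
    using A by (simp add: sparse_generic_mat_def)
  have fin: "finite R" "finite C"
    using finite_subset[OF R] finite_subset[OF C] by auto
  have "R \<noteq> {}"
    using det0 submatrix_carrier_mat[OF carrier R C] RC by auto
  then obtain r where r: "r \<in> R"
    by blast
  show ?case
  proof (cases "\<forall>c\<in>C. A $$ (r, c) = 0")
    case True
    then show ?thesis
      using r RC by (intro exI[of _ "{r}"] exI[of _ C]) auto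
  next
    case False
    then obtain c where c: "c \<in> C" "A $$ (r, c) \<noteq> 0"
      by blast
    have "det (submatrix A (R - {r}) (C - {c})) = 0"
      using sparse_generic_det_submatrix_zero_minor[OF A R C RC r c det0] .
    moreover have "card (R - {r}) < card R"
      using fin(1) r by (rule card_Diff1_less)
    moreover have "card (R - {r}) = card (C - {c})"
      using r c fin RC by simp
    ultimately obtain I' J' where I': "I' \<subseteq> R - {r}" and J': "J' \<subseteq> C - {c}"
      and "card I' + card J' = card (R - {r}) + 1" and zero': "\<forall>i\<in>I'. \<forall>j\<in>J'. A $$ (i, j) = 0"
      using less.hyps[of "R - {r}" "C - {c}"] R C by blast
    then have IJ': "card I' + card J' = card R"
      using r fin card_Diff1_less[of R r] by simp
    have fin': "finite I'" "finite J'" and sub': "I' \<subseteq> R" "J' \<subseteq> C"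
      using finite_subset[OF I'] finite_subset[OF J'] fin I' J' by auto
    have card_I': "card I' < card R" and card_J': "card J' < card R"
      using card_mono[OF _ I'] card_mono[OF _ J'] card_Diff1_less[of R r] card_Diff1_less[of C c]
        r c fin RC by fastforce+
    from det_submatrix_zero_block_split[OF carrier R C RC _ _ IJ' zero' det0] I' J'
    consider "det (submatrix A I' (C - J')) = 0" | "det (submatrix A (R - I') J') = 0"
      by blast
    then show ?thesis
    proof cases
      case 1
      have "card I' = card (C - J')" "I' \<subseteq> {..<n}" "C - J' \<subseteq> {..<n}"
        using card_Diff_subset[OF fin'(2) sub'(2)] card_mono[OF fin(2) sub'(2)] IJ' RC sub' R C by auto
      then obtain I J where IJ: "I \<subseteq> I'" "J \<subseteq> C - J'" "card I + card J = card I' + 1"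
        "\<forall>i\<in>I. \<forall>j\<in>J. A $$ (i, j) = 0"
        using less.hyps[OF card_I' _ _ _ 1] by blast
      have "card (J \<union> J') = card J + card J'"
        using finite_subset[OF IJ(2)] fin fin' IJ(2) by (intro card_Un_disjoint) auto
      then show ?thesis
        using IJ I' J' IJ' zero' by (intro exI[of _ I] exI[of _ "J \<union> J'"]) auto
    next
      case 2
      have "card (R - I') = card J'" "R - I' \<subseteq> {..<n}" "J' \<subseteq> {..<n}"
        using card_Diff_subset[OF fin'(1) sub'(1)] IJ' sub' R C by auto
      then obtain I J where IJ: "I \<subseteq> R - I'" "J \<subseteq> J'" "card I + card J = card J' + 1"
        "\<forall>i\<in>I. \<forall>j\<in>J. A $$ (i, j) = 0"
        using less.hyps[OF _ _ _ _ 2] card_J' by fastforce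
      have "card (I \<union> I') = card I + card I'"
        using finite_subset[OF IJ(1)] fin fin' IJ(1) by (intro card_Un_disjoint) auto
      then show ?thesis
        using IJ I' J' IJ' zero' by (intro exI[of _ "I \<union> I'"] exI[of _ J]) auto
    qed
  qed
qed

section \<open>Irreducibility and the cofactors of the generic matrix\<close>

lemma generic_matrix_carrier: "generic_matrix m S \<in> carrier_mat m m"
  by (simp add: generic_matrix_def)

lemma dim_generic_matrix [simp]:
  "dim_row (generic_matrix m S) = m" "dim_col (generic_matrix m S) = m"
  by (simp_all add: generic_matrix_def)

lemma generic_matrix_index:
  "i < m \<Longrightarrow> j < m \<Longrightarrow> generic_matrix m S $$ (i, j) = (if (i, j) \<in> S then mvar (i, j) else 0)"
  by (simp add: generic_matrix_def)

lemma sparse_generic_mat_generic_matrix: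
  "sparse_generic_mat m (generic_matrix m S :: (nat \<times> nat, 'a::comm_ring_1) mpoly mat)"
  unfolding sparse_generic_mat_def
  by (auto simp: generic_matrix_carrier generic_matrix_index mvar_inj)

lemma mpoly_vars_generic_matrix_entry:
  "i < m \<Longrightarrow> j < m \<Longrightarrow> mpoly_vars (generic_matrix m S $$ (i, j) :: (nat \<times> nat, 'a::comm_ring_1) mpoly) \<subseteq> S"
  by (simp add: generic_matrix_index)

lemma det_not_unit_if_entries_vanish:
  fixes B :: "('v, 'a::idom) mpoly mat"
  assumes B: "B \<in> carrier_mat N N" and N: "0 < N"
    and vanish: "\<And>i j. i < N \<Longrightarrow> j < N \<Longrightarrow> mpoly_eval x (B $$ (i, j)) = 0"
  shows "\<not> det B dvd 1"
proof
  interpret eval: comm_ring_hom "mpoly_eval x :: ('v, 'a) mpoly \<Rightarrow> 'a"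
    by (rule comm_ring_hom_mpoly_eval)
  assume "det B dvd 1"
  then have "det (map_mat (mpoly_eval x) B) dvd 1"
    by (simp add: eval.hom_dvd_1)
  moreover have "map_mat (mpoly_eval x) B = 0\<^sub>m N N"
    using B vanish by (intro eq_matI) auto
  ultimately show False
    using N by (simp add: det_zero)
qed

lemma det_generic_submatrix_not_unit:
  assumes "I \<subseteq> {..<m}" "K \<subseteq> {..<m}" "card I = card K" "I \<noteq> {}"
  shows "\<not> det (submatrix (generic_matrix m S) I K :: (nat \<times> nat, 'a::idom) mpoly mat) dvd 1"
proof (rule det_not_unit_if_entries_vanish)
  show "submatrix (generic_matrix m S) I K \<in> carrier_mat (card I) (card I)"
    using submatrix_carrier_mat[OF generic_matrix_carrier assms(1,2)] assms(3) by simp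
  show "0 < card I"
    using assms(1,4) finite_subset[OF assms(1)] by auto
  fix i j assume "i < card I" "j < card I"
  moreover have "pick I i < m" "pick K j < m" if "i < card I" "j < card K"
    using that pick_in_set_le[of i I] pick_in_set_le[of j K] assms(1,2) by auto
  ultimately show "mpoly_eval (\<lambda>_. 0) (submatrix (generic_matrix m S) I K $$ (i, j)) = (0::'a)"
    using assms(3)
    by (simp add: submatrix_index_subset[OF generic_matrix_carrier assms(1,2)] generic_matrix_index)
qed

text \<open>A zero block of total size m makes the determinant factor through two square blocks,
  each of which vanishes at the origin.\<close>
lemma generic_matrix_zero_block_not_irreducible:
  fixes S :: "(nat \<times> nat) set"
  assumes I: "I \<subseteq> {..<m}" "I \<noteq> {}" and J: "J \<subseteq> {..<m}" "J \<noteq> {}" and IJ: "card I + card J = m"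
    and zero: "\<forall>i\<in>I. \<forall>j\<in>J. (generic_matrix m S :: (nat \<times> nat, 'a::idom) mpoly mat) $$ (i, j) = 0"
  shows "\<not> irreducible (det (generic_matrix m S :: (nat \<times> nat, 'a) mpoly mat))"
proof
  let ?G = "generic_matrix m S :: (nat \<times> nat, 'a) mpoly mat"
  assume irr: "irreducible (det ?G)"
  have fin: "finite J"
    using finite_subset[OF J(1)] by simp
  have card_K: "card I = card ({..<m} - J)" and card_RI: "card ({..<m} - I) = card J"
    using card_Diff_subset[OF fin J(1)] card_Diff_subset[OF finite_subset[OF I(1)] I(1)] IJ by auto
  have "{..<m} - ({..<m} - J) = J"
    using J by auto
  then obtain s where s: "s * s = 1" and "det (submatrix ?G {..<m} {..<m})
      = s * (det (submatrix ?G I ({..<m} - J)) * det (submatrix ?G ({..<m} - I) J))"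
    using det_submatrix_block_triangular[OF generic_matrix_carrier subset_refl subset_refl refl I(1)
        Diff_subset card_K] zero by metis
  then have "det ?G = (s * det (submatrix ?G I ({..<m} - J))) * det (submatrix ?G ({..<m} - I) J)"
    by (simp add: submatrix_lessThan[OF generic_matrix_carrier] mult.assoc)
  then have "s * det (submatrix ?G I ({..<m} - J)) dvd 1 \<or> det (submatrix ?G ({..<m} - I) J) dvd 1"
    using irr unfolding irreducible_def by blast
  moreover have "s dvd 1"
    using s by (metis dvdI mult.commute)
  moreover have "{..<m} - I \<noteq> {}"
    using card_RI J(2) fin card_0_eq by fastforce
  ultimately show False
    using det_generic_submatrix_not_unit[OF I(1) Diff_subset card_K I(2)]
      det_generic_submatrix_not_unit[OF Diff_subset J(1) card_RI]
    by (auto simp: is_unit_mult_iff)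
qed

lemma cofactor_generic_matrix_nonzero:
  assumes irr: "irreducible (det (generic_matrix m S :: (nat \<times> nat, 'a::idom) mpoly mat))"
    and i: "i < m" and k: "k < m"
  shows "cofactor (generic_matrix m S :: (nat \<times> nat, 'a) mpoly mat) i k \<noteq> 0"
proof
  let ?G = "generic_matrix m S :: (nat \<times> nat, 'a) mpoly mat"
  assume "cofactor ?G i k = 0"
  moreover have "mat_delete ?G i k = submatrix ?G ({..<m} - {i}) ({..<m} - {k})"
    using mat_delete_submatrix[OF generic_matrix_carrier[of m S] subset_refl subset_refl, of i k] i k
    by (simp add: pick_lessThan submatrix_lessThan[OF generic_matrix_carrier])
  ultimately have "det (submatrix ?G ({..<m} - {i}) ({..<m} - {k})) = 0"
    by (simp add: cofactor_def)
  then have "\<exists>I J. I \<subseteq> {..<m} - {i} \<and> J \<subseteq> {..<m} - {k} \<and>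
      card I + card J = card ({..<m} - {i}) + 1 \<and> (\<forall>i\<in>I. \<forall>j\<in>J. ?G $$ (i, j) = 0)"
    using i k by (intro frobenius_koenig[OF sparse_generic_mat_generic_matrix]) auto
  then obtain I J where IJ: "I \<subseteq> {..<m} - {i}" "J \<subseteq> {..<m} - {k}" "card I + card J = m"
    and zero: "\<forall>i\<in>I. \<forall>j\<in>J. ?G $$ (i, j) = 0"
    using i by auto
  have "card I \<le> m - 1" "card J \<le> m - 1"
    using card_mono[OF _ IJ(1)] card_mono[OF _ IJ(2)] i k by auto
  then have "I \<noteq> {}" "J \<noteq> {}"
    using IJ(3) i by auto
  then show False
    using generic_matrix_zero_block_not_irreducible[OF _ _ _ _ IJ(3) zero] IJ(1,2) irr by blast
qed

text \<open>Replacing row i of A by the j-th unit row yields a matrix with determinant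
  cofactor A i j that still annihilates any null vector of A vanishing at j.\<close>
lemma null_vector_entry_nonzero:
  fixes A :: "'a::field mat"
  assumes A: "A \<in> carrier_mat n n" and i: "i < n" and j: "j < n" and cof: "cofactor A i j \<noteq> 0"
    and \<psi>: "\<psi> \<in> carrier_vec n" "\<psi> \<noteq> 0\<^sub>v n" "A *\<^sub>v \<psi> = 0\<^sub>v n"
  shows "\<psi> $ j \<noteq> 0"
proof
  assume \<psi>j: "\<psi> $ j = 0"
  define B where "B = mat n n (\<lambda>(a, b). if a = i then (if b = j then 1 else 0) else A $$ (a, b))"
  have B: "B \<in> carrier_mat n n"
    by (simp add: B_def)
  have "mat_delete B i j = mat_delete A i j"
    using A by (intro eq_matI) (auto simp: mat_delete_def B_def)
  then have "cofactor B i j = cofactor A i j"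
    by (simp add: cofactor_def)
  moreover have "det B = (\<Sum>b<n. B $$ (i, b) * cofactor B i b)"
    by (rule laplace_expansion_row[OF B i])
  moreover have "\<dots> = (\<Sum>b<n. if b = j then cofactor B i b else 0)"
    using i by (intro sum.cong) (auto simp: B_def)
  ultimately have "det B = cofactor A i j"
    using j by simp
  moreover have "B *\<^sub>v \<psi> = 0\<^sub>v n"
  proof (rule eq_vecI)
    fix a assume "a < dim_vec (0\<^sub>v n :: 'a vec)"
    then have a: "a < n"
      by simp
    show "(B *\<^sub>v \<psi>) $ a = 0\<^sub>v n $ a"
    proof (cases "a = i")
      case True
      then have "(B *\<^sub>v \<psi>) $ a = (\<Sum>b<n. (if b = j then 1 else 0) * \<psi> $ b)"
        using a \<psi>(1) by (auto simp: B_def scalar_prod_def atLeast0LessThan intro!: sum.cong)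
      also have "\<dots> = (\<Sum>b<n. if b = j then \<psi> $ b else 0)"
        by (rule sum.cong) auto
      finally show ?thesis
        using a j \<psi>j by simp
    next
      case False
      then have "(B *\<^sub>v \<psi>) $ a = (A *\<^sub>v \<psi>) $ a"
        using a A \<psi>(1) by (auto simp: B_def scalar_prod_def intro!: sum.cong)
      then show ?thesis
        using a \<psi>(3) by simp
    qed
  qed (use B in simp)
  ultimately show False
    using det_0_iff_vec_prod_zero_field[OF B] \<psi> cof by auto
qed

lemma generic_matrix_zero_or_other_var:
  "i < m \<Longrightarrow> j < m \<Longrightarrow> (i, j) \<noteq> v \<Longrightarrow> zero_or_other_var v (generic_matrix m S $$ (i, j))"
  by (auto simp: generic_matrix_index zero_or_other_var_def)

lemma det_generic_matrix_not_dvd_row_cofactor_prod: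
  assumes irr: "irreducible (det (generic_matrix m S :: (nat \<times> nat, 'a::idom) mpoly mat))"
    and i: "i < m"
  shows "\<not> det (generic_matrix m S) dvd (\<Prod>k<m. cofactor (generic_matrix m S :: (nat \<times> nat, 'a) mpoly mat) i k)"
proof -
  let ?G = "generic_matrix m S :: (nat \<times> nat, 'a) mpoly mat"
  let ?P = "\<Prod>k<m. cofactor ?G i k"
  interpret const: comm_ring_hom "\<lambda>a::(nat \<times> nat, 'a) mpoly. [:a:]"
    by (rule comm_ring_hom_const_poly)
  obtain j where j: "j < m" "(i, j) \<in> S"
  proof (rule ccontr)
    assume "\<not> thesis"
    then have "\<forall>j<m. (i, j) \<notin> S"
      using that by blast
    then have "det ?G = 0"
      using laplace_expansion_row[OF generic_matrix_carrier[of m S] i] i by (simp add: generic_matrix_index)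
    then show False
      using irr by auto
  qed
  then have v: "?G $$ (i, j) = mvar (i, j)"
    using i by (simp add: generic_matrix_index)
  obtain b where "poly_in_var (i, j) (det ?G) = [:b, cofactor ?G i j:]"
    using poly_in_var_det_linear[OF generic_matrix_carrier i j(1) v] generic_matrix_zero_or_other_var by blast
  moreover have "cofactor ?G i j \<noteq> 0" "?P \<noteq> 0"
    using cofactor_generic_matrix_nonzero[OF irr i] j by auto
  moreover have "poly_in_var (i, j) (cofactor ?G i k) = [:cofactor ?G i k:]" for k
    by (rule poly_in_var_cofactor_const) (simp add: generic_matrix_zero_or_other_var)
  then have "poly_in_var (i, j) ?P = [:?P:]"
    by (simp add: poly_in_var.hom_prod const.hom_prod)
  ultimately show ?thesis
    by (rule not_dvd_if_poly_in_var_linear)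
qed

theorem generic_matrix_null_vectors_nowhere_zero:
  fixes S :: "(nat \<times> nat) set"
  assumes irr: "irreducible (det (generic_matrix m S :: (nat \<times> nat, 'a::field) mpoly mat))"
  shows "\<exists>P :: (nat \<times> nat, 'a) mpoly.
         mpoly_vars P \<subseteq> S \<and> \<not> (det (generic_matrix m S) dvd P) \<and>
         (\<forall>x :: nat \<times> nat \<Rightarrow> 'a.
            mpoly_eval x (det (generic_matrix m S)) = 0 \<and> mpoly_eval x P \<noteq> 0 \<longrightarrow>
            (\<forall>\<psi> \<in> carrier_vec m. \<psi> \<noteq> 0\<^sub>v m \<and> eval_matrix x (generic_matrix m S) *\<^sub>v \<psi> = 0\<^sub>v m \<longrightarrow>
               (\<forall>j < m. \<psi> $ j \<noteq> 0)))"
proof (intro exI conjI allI impI ballI)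
  let ?G = "generic_matrix m S :: (nat \<times> nat, 'a) mpoly mat"
  let ?P = "\<Prod>k<m. cofactor ?G 0 k"
  have m: "0 < m"
    using irr by (intro gr0I) (simp add: generic_matrix_carrier)
  show "mpoly_vars ?P \<subseteq> S"
    using generic_matrix_carrier[of m S]
    by (intro mpoly_vars_prod mpoly_vars_cofactor mpoly_vars_generic_matrix_entry) auto
  show "\<not> det ?G dvd ?P"
    using det_generic_matrix_not_dvd_row_cofactor_prod[OF irr m] .
  fix x :: "nat \<times> nat \<Rightarrow> 'a" and \<psi> and j
  interpret eval: comm_ring_hom "mpoly_eval x :: (nat \<times> nat, 'a) mpoly \<Rightarrow> 'a"
    by (rule comm_ring_hom_mpoly_eval)
  assume "mpoly_eval x (det ?G) = 0 \<and> mpoly_eval x ?P \<noteq> 0" and j: "j < m"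
    and \<psi>: "\<psi> \<in> carrier_vec m" "\<psi> \<noteq> 0\<^sub>v m \<and> eval_matrix x ?G *\<^sub>v \<psi> = 0\<^sub>v m"
  then have "mpoly_eval x (cofactor ?G 0 j) \<noteq> 0"
    by (auto simp: eval.hom_prod)
  then have "cofactor (eval_matrix x ?G) 0 j \<noteq> 0"
    by (simp add: eval.hom_cofactor eval_matrix_def)
  then show "\<psi> $ j \<noteq> 0"
    using null_vector_entry_nonzero[of "eval_matrix x ?G" m 0 j \<psi>] m j \<psi>
    by (simp add: eval_matrix_def generic_matrix_carrier)
qed

theorem mainTheorem2:
  fixes m :: nat and S :: "(nat \<times> nat) set"
  assumes "m \<ge> 2" and "S \<subseteq> {..<m} \<times> {..<m}"
  shows
   "(irreducible (det (generic_matrix m S :: (nat \<times> nat, real) mpoly mat)) \<longrightarrow>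
      (\<exists>P :: (nat \<times> nat, real) mpoly.
         mpoly_vars P \<subseteq> S \<and> \<not> (det (generic_matrix m S) dvd P) \<and>
         (\<forall>x :: nat \<times> nat \<Rightarrow> real.
            mpoly_eval x (det (generic_matrix m S)) = 0 \<and> mpoly_eval x P \<noteq> 0 \<longrightarrow>
            (\<forall>\<psi> \<in> carrier_vec m. \<psi> \<noteq> 0\<^sub>v m \<and> eval_matrix x (generic_matrix m S) *\<^sub>v \<psi> = 0\<^sub>v m \<longrightarrow>
               (\<forall>j < m. \<psi> $ j \<noteq> 0)))))
  \<and>
    (irreducible (det (generic_matrix m S :: (nat \<times> nat, complex) mpoly mat)) \<longrightarrow>
      (\<exists>P :: (nat \<times> nat, complex) mpoly.
         mpoly_vars P \<subseteq> S \<and> \<not> (det (generic_matrix m S) dvd P) \<and>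
         (\<forall>x :: nat \<times> nat \<Rightarrow> complex.
            mpoly_eval x (det (generic_matrix m S)) = 0 \<and> mpoly_eval x P \<noteq> 0 \<longrightarrow>
            (\<forall>\<psi> \<in> carrier_vec m. \<psi> \<noteq> 0\<^sub>v m \<and> eval_matrix x (generic_matrix m S) *\<^sub>v \<psi> = 0\<^sub>v m \<longrightarrow>
               (\<forall>j < m. \<psi> $ j \<noteq> 0)))))"
  by (intro conjI impI generic_matrix_null_vectors_nowhere_zero)

end
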